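(* Let $(X,d)$ be a metric space, $p>1$, $x_1,x_2,x_3\in X$ and $0\le r<t$. Then the function $$s\mapsto\sqrt{\bar H_p(x_1,r;x_2,s)}+\sqrt{\bar H_p(x_2,s;x_3,t)}$$ is increasing on $[t,+\infty)$, where $\bar H_p(x,r;y,t)=\mathfrak{M}_1(r,t)-\mathfrak{M}_{1-p}(r,t)\cos\big(d(x,y)\wedge\frac{\pi}{2}\big)$.
   Context: Power means: for $r,t\ge0$ and $q\neq0$, $\mathfrak{M}_q(r,t)=\big(\frac{r^q+t^q}{2}\big)^{1/q}$, except $\mathfrak{M}_q(r,t)=0$ when $q<0$ and $r=0$ or $t=0$. "Increasing" means non-decreasing. *)

theory Defs
  imports "HOL-Analysis.Analysis"
begin

definition power_mean :: "real \<Rightarrow> real \<Rightarrow> real \<Rightarrow> real" where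
  "power_mean q r t =
     (if q < 0 \<and> (r = 0 \<or> t = 0) then 0
      else ((r powr q + t powr q) / 2) powr (1 / q))"

definition Hbar :: "real \<Rightarrow> 'a::metric_space \<Rightarrow> real \<Rightarrow> 'a \<Rightarrow> real \<Rightarrow> real" where
  "Hbar p x r y t = power_mean 1 r t - power_mean (1 - p) r t * cos (min (dist x y) (pi / 2))"

end

theory Submission
  imports Defs
begin

text \<open>
  Put \<open>q = 1 - p < 0\<close>. For fixed \<open>b > 0\<close> and \<open>s \<ge> b\<close> one has
  \<open>d/ds M\<^sub>q(b,s) = (M\<^sub>q(b,s)/s)\<^bsup>1-q\<^esup>/2 \<le> 1/2 = d/ds M\<^sub>1(b,s)\<close>, because
  \<open>M\<^sub>q(b,s) \<le> max b s = s\<close>. As the cosine factor lies in \<open>[0,1]\<close>, \<open>H\<^sub>p\<close> is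
  therefore nondecreasing in its larger radius. On \<open>[t,\<infinity>)\<close> the variable \<open>s\<close> is the larger
  radius of both summands (\<open>H\<^sub>p\<close> is symmetric), so both summands, their square roots and
  the sum are nondecreasing.
\<close>

lemma power_mean_commute: "power_mean q r t = power_mean q t r"
  unfolding power_mean_def by (metis add.commute)

lemma power_mean_one: "0 \<le> r \<Longrightarrow> 0 \<le> t \<Longrightarrow> power_mean 1 r t = (r + t) / 2"
  by (simp add: power_mean_def)

lemma power_mean_neg_zero_left: "q < 0 \<Longrightarrow> power_mean q 0 t = 0"
  by (simp add: power_mean_def)

lemma power_mean_neg_pos:
  "q < 0 \<Longrightarrow> 0 < r \<Longrightarrow> 0 < t \<Longrightarrow> power_mean q r t = ((r powr q + t powr q) / 2) powr (1 / q)"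
  by (simp add: power_mean_def)

lemma power_mean_neg_le_right:
  assumes "q < 0" "0 < r" "r \<le> t"
  shows "power_mean q r t \<le> t"
proof -
  have "t powr q \<le> (r powr q + t powr q) / 2"
    using powr_mono2'[of q r t] assms by simp
  then have "((r powr q + t powr q) / 2) powr (1 / q) \<le> (t powr q) powr (1 / q)"
    using assms by (intro powr_mono2') (auto simp: divide_neg_pos)
  then show ?thesis
    using assms by (simp add: power_mean_neg_pos powr_powr)
qed

lemma has_real_derivative_power_mean_neg:
  assumes "q < 0" "0 < r" "0 < t"
  shows "((\<lambda>s. ((r powr q + s powr q) / 2) powr (1 / q))
           has_real_derivative (power_mean q r t / t) powr (1 - q) / 2) (at t)"
proof -
  define X where "X = (r powr q + t powr q) / 2"
  have "0 < X" using assms unfolding X_def by (intro divide_pos_pos add_pos_pos) auto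
  have "((\<lambda>s. ((r powr q + s powr q) / 2) powr (1 / q))
           has_real_derivative (1 / q) * X powr (1 / q - 1) * (q * t powr (q - 1) / 2)) (at t)"
    using assms \<open>0 < X\<close> unfolding X_def
    by (auto intro!: derivative_eq_intros simp: field_simps)
  moreover have "(1 / q) * X powr (1 / q - 1) * (q * t powr (q - 1) / 2) = (power_mean q r t / t) powr (1 - q) / 2"
  proof -
    have "power_mean q r t = X powr (1 / q)"
      using assms by (simp add: power_mean_neg_pos X_def)
    moreover have "X powr (1 / q - 1) = (X powr (1 / q)) powr (1 - q)"
      using assms by (simp add: powr_powr field_simps)
    moreover have "t powr (q - 1) = 1 / t powr (1 - q)"
      using powr_minus_divide[of t "1 - q"] by simp
    ultimately show ?thesis
      using assms \<open>0 < X\<close> by (simp add: powr_divide)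
  qed
  ultimately show ?thesis by simp
qed

lemma power_mean_one_minus_neg_mono_on:
  assumes q: "q < 0" and b: "0 \<le> b" and c: "0 \<le> c" "c \<le> 1"
  shows "mono_on {b..} (\<lambda>s. power_mean 1 b s - c * power_mean q b s)"
proof (cases "b = 0")
  case True
  then show ?thesis
    using q by (intro mono_onI) (simp add: power_mean_one power_mean_neg_zero_left)
next
  case False
  with b have b: "0 < b" by simp
  define f where "f s = (b + s) / 2 - c * ((b powr q + s powr q) / 2) powr (1 / q)" for s
  have f_mono: "f s \<le> f s'" if "b \<le> s" "s \<le> s'" for s s'
  proof (rule DERIV_nonneg_imp_nondecreasing[OF \<open>s \<le> s'\<close>])
    fix x assume "s \<le> x" "x \<le> s'"
    with \<open>b \<le> s\<close> b have x: "0 < x" "b \<le> x" by auto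
    let ?D = "(power_mean q b x / x) powr (1 - q) / 2"
    have "((\<lambda>s. (b + s) / 2) has_real_derivative 1 / 2) (at x)"
      by (auto intro!: derivative_eq_intros)
    then have "(f has_real_derivative 1 / 2 - c * ?D) (at x)"
      unfolding f_def by (intro DERIV_diff DERIV_cmult has_real_derivative_power_mean_neg q b x)
    moreover have "c * ?D \<le> 1 * (1 / 2)"
    proof (intro mult_mono)
      have "0 \<le> power_mean q b x"
        using q b x by (simp add: power_mean_neg_pos)
      moreover have "power_mean q b x \<le> x"
        using power_mean_neg_le_right[OF q b x(2)] .
      ultimately show "?D \<le> 1 / 2"
        using q x by (simp add: powr_le1)
    qed (use c in auto)
    ultimately show "\<exists>y. (f has_real_derivative y) (at x) \<and> 0 \<le> y"
      by force
  qed
  show ?thesis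
  proof (intro mono_onI)
    fix s s' assume "s \<in> {b..}" "s' \<in> {b..}" "s \<le> s'"
    then show "power_mean 1 b s - c * power_mean q b s \<le> power_mean 1 b s' - c * power_mean q b s'"
      using f_mono[of s s'] q b by (simp add: f_def power_mean_one power_mean_neg_pos)
  qed
qed

lemma cos_min_pi_half_nonneg: "0 \<le> d \<Longrightarrow> 0 \<le> cos (min d (pi / 2))"
  by (rule cos_ge_zero) (auto simp: min_def)

lemma Hbar_commute: "Hbar p x r y t = Hbar p y t x r"
  by (simp add: Hbar_def power_mean_commute dist_commute)

lemma Hbar_mono_on:
  assumes "1 < p" and "0 \<le> r"
  shows "mono_on {r..} (Hbar p x r y)"
proof -
  have "mono_on {r..} (\<lambda>s. power_mean 1 r s - cos (min (dist x y) (pi / 2)) * power_mean (1 - p) r s)"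
    using assms by (intro power_mean_one_minus_neg_mono_on cos_min_pi_half_nonneg cos_le_one) auto
  then show ?thesis
    by (simp add: Hbar_def[abs_def] mult.commute)
qed

theorem mainTheorem16:
  fixes x1 x2 x3 :: "'a::metric_space" and p r t :: real
  assumes "p > 1" and "0 \<le> r" and "r < t"
  shows "mono_on {t..} (\<lambda>s. sqrt (Hbar p x1 r x2 s) + sqrt (Hbar p x2 s x3 t))"
proof -
  have first: "mono_on {t..} (Hbar p x1 r x2)"
    by (rule mono_on_subset[OF Hbar_mono_on]) (use assms in auto)
  have second: "mono_on {t..} (Hbar p x3 t x2)"
    using Hbar_mono_on[of p t x3 x2] assms by simp
  show ?thesis
  proof (intro mono_onI add_mono real_sqrt_le_mono)
    fix s s' assume s: "s \<in> {t..}" "s' \<in> {t..}" "s \<le> s'"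
    show "Hbar p x1 r x2 s \<le> Hbar p x1 r x2 s'"
      using mono_onD[OF first s] .
    show "Hbar p x2 s x3 t \<le> Hbar p x2 s' x3 t"
      using mono_onD[OF second s] by (simp add: Hbar_commute[of p x2 _ x3 t])
  qed
qed

end
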